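(* Let $V,W$ be finite-dimensional real vector spaces and let $\mathcal{R}=(\mathcal{R}^0,\mathcal{R}^1,\dots)$ be a sequence in $\mathscr{P}(V;W)$. If $\mathrm{Kern}(\mathrm{Eval}_{\mathcal{R}})$ is an ideal of $\mathscr{P}(V)[\lambda]$, then $P_{\min}(\mathcal{R})\in\mathscr{P}(V)[\lambda]$ and $$\mathrm{Kern}(\mathrm{Eval}_{\mathcal{R}})=\mathscr{P}(V)[\lambda]\cdot P_{\min}(\mathcal{R}).$$
   Context: $\mathscr{P}(V)$ and $\mathscr{F}(V)$ are the rings of real polynomial and rational functions on $V$. $\mathscr{P}(V;W)$ and $\mathscr{F}(V;W)$ are the modules of $W$-valued polynomial and rational functions. $\mathscr{A}_j(\mathcal{R})=\{X\in V: \mathcal{R}^0(X),\dots,\mathcal{R}^j(X)\text{ linearly dependent in }W\}$. Let $k\ge0$ be the smallest integer with $\mathscr{A}_k(\mathcal{R})=V$. Then $P_{\min}(\mathcal{R})=\lambda^k+\sum_{i=1}^k a_i\lambda^{k-i}$, where $a_i\in\mathscr{F}(V)$ are the unique rational functions with $\mathcal{R}^k=-\sum_{i=1}^k a_i\mathcal{R}^{k-i}$ in $\mathscr{F}(V;W)$. $\mathrm{Eval}_{\mathcal{R}}\colon\mathscr{P}(V)[\lambda]\to\mathscr{P}(V;W)$ is the unique $\mathscr{P}(V)$-module homomorphism with $\lambda^i\mapsto\mathcal{R}^i$. *)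

theory Defs
  imports "HOL-Analysis.Analysis"
begin

text \<open>P(V): real polynomial functions on a finite-dimensional real vector space V
  (modelled by a euclidean_space): the smallest algebra of functions containing the
  constants and the linear functionals.\<close>
inductive polyfun :: "('a::euclidean_space \<Rightarrow> real) \<Rightarrow> bool" where
  const: "polyfun (\<lambda>x. c)"
| lin: "polyfun (\<lambda>x. x \<bullet> b)"
| add: "polyfun f \<Longrightarrow> polyfun g \<Longrightarrow> polyfun (\<lambda>x. f x + g x)"
| mult: "polyfun f \<Longrightarrow> polyfun g \<Longrightarrow> polyfun (\<lambda>x. f x * g x)"

definition polyfun_vec :: "('a::euclidean_space \<Rightarrow> 'b::euclidean_space) \<Rightarrow> bool" where
  "polyfun_vec f \<longleftrightarrow> (\<forall>b\<in>Basis. polyfun (\<lambda>x. f x \<bullet> b))"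

text \<open>P(V)[lambda]: coefficient sequences with polynomial coefficients and finite support;
  c i is the coefficient of lambda^i.\<close>
definition polyseq :: "(nat \<Rightarrow> 'a::euclidean_space \<Rightarrow> real) set" where
  "polyseq = {c. (\<forall>i. polyfun (c i)) \<and> finite {i. c i \<noteq> (\<lambda>_. 0)}}"

definition pzero :: "nat \<Rightarrow> 'a \<Rightarrow> real" where
  "pzero = (\<lambda>i x. 0)"

definition padd :: "(nat \<Rightarrow> 'a \<Rightarrow> real) \<Rightarrow> (nat \<Rightarrow> 'a \<Rightarrow> real) \<Rightarrow> nat \<Rightarrow> 'a \<Rightarrow> real" where
  "padd c d = (\<lambda>i x. c i x + d i x)"

definition pmul :: "(nat \<Rightarrow> 'a \<Rightarrow> real) \<Rightarrow> (nat \<Rightarrow> 'a \<Rightarrow> real) \<Rightarrow> nat \<Rightarrow> 'a \<Rightarrow> real" where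
  "pmul c d = (\<lambda>n x. \<Sum>i\<le>n. c i x * d (n - i) x)"

definition is_ideal :: "(nat \<Rightarrow> 'a::euclidean_space \<Rightarrow> real) set \<Rightarrow> bool" where
  "is_ideal I \<longleftrightarrow> I \<subseteq> polyseq \<and> pzero \<in> I \<and> (\<forall>c\<in>I. \<forall>d\<in>I. padd c d \<in> I)
     \<and> (\<forall>d\<in>polyseq. \<forall>c\<in>I. pmul d c \<in> I)"

definition Eval :: "(nat \<Rightarrow> 'a \<Rightarrow> 'b::real_vector) \<Rightarrow> (nat \<Rightarrow> 'a \<Rightarrow> real) \<Rightarrow> 'a \<Rightarrow> 'b" where
  "Eval R c = (\<lambda>x. \<Sum>i\<in>{i. c i \<noteq> (\<lambda>_. 0)}. c i x *\<^sub>R R i x)"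

definition Kern_Eval :: "(nat \<Rightarrow> 'a::euclidean_space \<Rightarrow> 'b::euclidean_space) \<Rightarrow> (nat \<Rightarrow> 'a \<Rightarrow> real) set" where
  "Kern_Eval R = {c \<in> polyseq. Eval R c = (\<lambda>_. 0)}"

definition A_set :: "(nat \<Rightarrow> 'a \<Rightarrow> 'b::real_vector) \<Rightarrow> nat \<Rightarrow> 'a set" where
  "A_set R j = {X. \<exists>c::nat \<Rightarrow> real. (\<exists>i\<le>j. c i \<noteq> 0) \<and> (\<Sum>i\<le>j. c i *\<^sub>R R i X) = 0}"

definition kmin :: "(nat \<Rightarrow> 'a \<Rightarrow> 'b::real_vector) \<Rightarrow> nat" where
  "kmin R = (LEAST k. A_set R k = UNIV)"

text \<open>Rational functions F(V) represented as quotients p/q of polynomial functions, q nonzero.\<close>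
definition ratfun :: "('a::euclidean_space \<Rightarrow> real) \<times> ('a \<Rightarrow> real) \<Rightarrow> bool" where
  "ratfun a \<longleftrightarrow> polyfun (fst a) \<and> polyfun (snd a) \<and> snd a \<noteq> (\<lambda>_. 0)"

text \<open>The identity R^k = - sum_{i=1}^k a_i R^(k-i) in F(V;W), with a_i = p_i/q_i,
  after multiplying by the (nonzero) common denominator prod_i q_i.\<close>
definition minrel :: "(nat \<Rightarrow> 'a \<Rightarrow> 'b::real_vector) \<Rightarrow> nat
     \<Rightarrow> (nat \<Rightarrow> ('a \<Rightarrow> real) \<times> ('a \<Rightarrow> real)) \<Rightarrow> bool" where
  "minrel R k a \<longleftrightarrow> (\<forall>x. (\<Prod>i\<in>{1..k}. snd (a i) x) *\<^sub>R R k x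
      + (\<Sum>i\<in>{1..k}. (fst (a i) x * (\<Prod>j\<in>{1..k}-{i}. snd (a j) x)) *\<^sub>R R (k - i) x) = 0)"

text \<open>Coefficient sequence of lambda^k + sum_{i=1}^k r_i lambda^(k-i).\<close>
definition monic_seq :: "nat \<Rightarrow> (nat \<Rightarrow> 'a \<Rightarrow> real) \<Rightarrow> nat \<Rightarrow> 'a \<Rightarrow> real" where
  "monic_seq k r = (\<lambda>j x. if j = k then 1 else if j < k then r (k - j) x else 0)"

end

theory Submission
  imports Defs "HOL-Computational_Algebra.Polynomial_Factorial" "HOL-Computational_Algebra.Field_as_Ring"
begin

text \<open>
  Let \<open>k = kmin R\<close>. A division-free Gram--Schmidt process yields a polynomial \<open>g\<close> whose
  nonvanishing means that \<open>R\<^sup>0, \<dots>, R\<^sup>k\<^sup>-\<^sup>1\<close> are independent, and a relation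
  \<open>\<Sum>i\<le>k. q\<^sub>i R\<^sup>i = 0\<close> with polynomial coefficients and \<open>q\<^sub>k = g \<noteq> 0\<close>. Since the kernel is
  an ideal, every shift \<open>\<Sum>i\<le>k. q\<^sub>i R\<^sup>i\<^sup>+\<^sup>s = 0\<close> holds as well; pairing with the last
  Gram--Schmidt vector turns these into a scalar recurrence whose solution starts with
  \<open>k - 1\<close> zeros. Restricted to a line, a \<open>p\<close>-adic form of Gauss's lemma in \<open>\<real>[t]\<close> shows
  that \<open>q\<^sub>k\<close> divides every \<open>q\<^sub>i\<close>; dividing along lines on which \<open>q\<^sub>k\<close> has constant leading
  coefficient and using that the zero set of a nonzero polynomial has dense complement, the
  quotients are polynomial. So \<open>P\<^sub>m\<^sub>i\<^sub>n(R)\<close> has polynomial coefficients. Finally, since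
  \<open>R\<^sup>0, \<dots>, R\<^sup>k\<^sup>-\<^sup>1\<close> admit no nontrivial relation over \<open>P(V)\<close>, the coefficients of
  \<open>P\<^sub>m\<^sub>i\<^sub>n(R)\<close> are the only solution of \<open>minrel\<close>, and long division by the monic
  \<open>P\<^sub>m\<^sub>i\<^sub>n(R)\<close> leaves remainders in the kernel of degree below \<open>k\<close>, hence zero.
\<close>

lemma polyfun_uminus: "polyfun f \<Longrightarrow> polyfun (\<lambda>x. - f x)"
  using polyfun.mult[OF polyfun.const[of "-1"]] by simp

lemma polyfun_minus: "polyfun f \<Longrightarrow> polyfun g \<Longrightarrow> polyfun (\<lambda>x. f x - g x)"
  using polyfun.add[OF _ polyfun_uminus] by simp

lemma polyfun_divide_const: "polyfun f \<Longrightarrow> polyfun (\<lambda>x. f x / c)"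
  using polyfun.mult[OF _ polyfun.const[of "inverse c"]] by (simp add: divide_inverse)

lemma polyfun_If: "polyfun f \<Longrightarrow> polyfun g \<Longrightarrow> polyfun (\<lambda>x. if P then f x else g x)"
  by (cases P) simp_all

lemma polyfun_sum: "(\<And>i. i \<in> S \<Longrightarrow> polyfun (f i)) \<Longrightarrow> polyfun (\<lambda>x. \<Sum>i\<in>S. f i x)"
  by (induction S rule: infinite_finite_induct) (simp_all add: polyfun.const polyfun.add)

lemma polyfun_prod: "(\<And>i. i \<in> S \<Longrightarrow> polyfun (f i)) \<Longrightarrow> polyfun (\<lambda>x. \<Prod>i\<in>S. f i x)"
  by (induction S rule: infinite_finite_induct) (simp_all add: polyfun.const polyfun.mult)

lemma polyfun_inner:
  assumes "polyfun_vec f" "polyfun_vec g"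
  shows "polyfun (\<lambda>x. f x \<bullet> g x)"
proof -
  have "polyfun (\<lambda>x. \<Sum>b\<in>Basis. (f x \<bullet> b) * (g x \<bullet> b))"
    using assms by (intro polyfun_sum polyfun.mult) (auto simp: polyfun_vec_def)
  then show ?thesis
    by (subst euclidean_inner) (simp only: inner_commute)
qed

lemma polyfun_vec_minus: "polyfun_vec f \<Longrightarrow> polyfun_vec g \<Longrightarrow> polyfun_vec (\<lambda>x. f x - g x)"
  by (simp add: polyfun_vec_def inner_diff_left polyfun_minus)

lemma polyfun_vec_scaleR: "polyfun c \<Longrightarrow> polyfun_vec f \<Longrightarrow> polyfun_vec (\<lambda>x. c x *\<^sub>R f x)"
  by (simp add: polyfun_vec_def polyfun.mult)

lemma polyfun_vec_sum:
  "(\<And>i. i \<in> S \<Longrightarrow> polyfun_vec (f i)) \<Longrightarrow> polyfun_vec (\<lambda>x. \<Sum>i\<in>S. f i x)"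
  unfolding polyfun_vec_def by (auto simp: inner_sum_left intro!: polyfun_sum)

section \<open>Restriction to lines\<close>

lemma polyfun_on_line: "polyfun f \<Longrightarrow> \<exists>p. \<forall>t. f (y + t *\<^sub>R v) = poly p t"
proof (induction rule: polyfun.induct)
  case (const c)
  show ?case by (rule exI[of _ "[:c:]"]) simp
next
  case (lin b)
  show ?case
    by (rule exI[of _ "[:y \<bullet> b, v \<bullet> b:]"]) (simp add: inner_add_left algebra_simps)
next
  case (add f g)
  then obtain p q where "\<forall>t. f (y + t *\<^sub>R v) = poly p t" "\<forall>t. g (y + t *\<^sub>R v) = poly q t"
    by blast
  then show ?case by (intro exI[of _ "p + q"]) simp
next
  case (mult f g)
  then obtain p q where "\<forall>t. f (y + t *\<^sub>R v) = poly p t" "\<forall>t. g (y + t *\<^sub>R v) = poly q t"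
    by blast
  then show ?case by (intro exI[of _ "p * q"]) simp
qed

definition line_poly :: "'a::euclidean_space \<Rightarrow> ('a \<Rightarrow> real) \<Rightarrow> 'a \<Rightarrow> real poly" where
  "line_poly v f y = (SOME p. \<forall>t. f (y + t *\<^sub>R v) = poly p t)"

lemma poly_line_poly: "polyfun f \<Longrightarrow> poly (line_poly v f y) t = f (y + t *\<^sub>R v)"
  unfolding line_poly_def using someI_ex[OF polyfun_on_line[of f y v]] by metis

lemma line_poly_eqI:
  assumes "\<And>t. f (y + t *\<^sub>R v) = poly p t"
  shows "line_poly v f y = p"
proof -
  have "\<forall>t. f (y + t *\<^sub>R v) = poly (line_poly v f y) t"
    unfolding line_poly_def by (rule someI[of _ p]) (use assms in blast)
  then have "poly (line_poly v f y) = poly p"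
    using assms by auto
  then show ?thesis
    by (simp add: poly_eq_poly_eq_iff)
qed

lemma poly_line_poly_0: "polyfun f \<Longrightarrow> poly (line_poly v f y) 0 = f y"
  by (simp add: poly_line_poly)

lemma line_poly_const: "line_poly v (\<lambda>_. c) y = [:c:]"
  by (rule line_poly_eqI) simp

lemma line_poly_inner: "line_poly v (\<lambda>x. x \<bullet> b) y = [:y \<bullet> b, v \<bullet> b:]"
  by (rule line_poly_eqI) (simp add: inner_add_left algebra_simps)

lemma line_poly_add:
  "polyfun f \<Longrightarrow> polyfun g \<Longrightarrow> line_poly v (\<lambda>x. f x + g x) y = line_poly v f y + line_poly v g y"
  by (rule line_poly_eqI) (simp add: poly_line_poly)

lemma line_poly_mult:
  "polyfun f \<Longrightarrow> polyfun g \<Longrightarrow> line_poly v (\<lambda>x. f x * g x) y = line_poly v f y * line_poly v g y"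
  by (rule line_poly_eqI) (simp add: poly_line_poly)

lemma polyfun_eq_0_if_eq_0_where_nonzero:
  assumes "polyfun f" "polyfun g" "f \<noteq> (\<lambda>_. 0)" "\<And>x. f x \<noteq> 0 \<Longrightarrow> g x = 0"
  shows "g = (\<lambda>_. 0)"
proof
  fix x
  obtain x1 where x1: "f x1 \<noteq> 0"
    using assms(3) by auto
  define p where "p = line_poly (x - x1) f x1"
  define q where "q = line_poly (x - x1) g x1"
  have "poly (p * q) t = 0" for t
    using assms(4)[of "x1 + t *\<^sub>R (x - x1)"]
    by (auto simp: p_def q_def poly_line_poly assms(1,2))
  then have "p * q = 0"
    using poly_all_0_iff_0 by blast
  moreover have "p \<noteq> 0"
    using x1 poly_line_poly_0[OF assms(1)] by (metis p_def poly_0)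
  ultimately have "q = 0" by simp
  then show "g x = 0"
    using poly_line_poly[OF assms(2), of "x - x1" x1 1] by (simp add: q_def)
qed

lemma polyfun_vec_eq_0_if_eq_0_where_nonzero:
  assumes "polyfun f" "polyfun_vec G" "f \<noteq> (\<lambda>_. 0)" "\<And>x. f x \<noteq> 0 \<Longrightarrow> G x = 0"
  shows "G = (\<lambda>_. 0)"
proof
  fix x
  have "(\<lambda>x. G x \<bullet> b) = (\<lambda>_. 0)" if "b \<in> Basis" for b
    using assms that
    by (intro polyfun_eq_0_if_eq_0_where_nonzero[of f]) (auto simp: polyfun_vec_def)
  then show "G x = 0"
    by (metis euclidean_all_zero_iff)
qed

lemma polyfun_mult_nonzero:
  assumes "polyfun f" "polyfun g" "f \<noteq> (\<lambda>_. 0)" "g \<noteq> (\<lambda>_. 0)"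
  shows "(\<lambda>x. f x * g x) \<noteq> (\<lambda>_. 0)"
  using polyfun_eq_0_if_eq_0_where_nonzero[OF assms(1,2,3)] assms(4) by (auto simp: fun_eq_iff)

lemma polyfun_prod_nonzero:
  assumes "finite S" "\<And>i. i \<in> S \<Longrightarrow> polyfun (f i) \<and> f i \<noteq> (\<lambda>_. 0)"
  shows "(\<lambda>x. \<Prod>i\<in>S. f i x) \<noteq> (\<lambda>_. 0)"
  using assms
proof (induction S rule: finite_induct)
  case (insert a S)
  then have "(\<lambda>x. f a x * (\<Prod>i\<in>S. f i x)) \<noteq> (\<lambda>_. 0)"
    by (intro polyfun_mult_nonzero polyfun_prod) auto
  then show ?case
    using insert.hyps by simp
qed (simp add: fun_eq_iff)

section \<open>Degree and leading coefficients along lines\<close>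

inductive polyfun_deg :: "nat \<Rightarrow> ('a::euclidean_space \<Rightarrow> real) \<Rightarrow> bool" where
  const: "polyfun_deg n (\<lambda>x. c)"
| lin: "1 \<le> n \<Longrightarrow> polyfun_deg n (\<lambda>x. x \<bullet> b)"
| add: "polyfun_deg n f \<Longrightarrow> polyfun_deg n g \<Longrightarrow> polyfun_deg n (\<lambda>x. f x + g x)"
| mult: "polyfun_deg m f \<Longrightarrow> polyfun_deg n g \<Longrightarrow> polyfun_deg (m + n) (\<lambda>x. f x * g x)"

lemma polyfun_deg_mono: "polyfun_deg n f \<Longrightarrow> n \<le> m \<Longrightarrow> polyfun_deg m f"
proof (induction arbitrary: m rule: polyfun_deg.induct)
  case (mult a f b g)
  then have "polyfun_deg (m - b) f" by simp
  from polyfun_deg.mult[OF this mult.hyps(2)] show ?case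
    using mult.prems by simp
qed (auto intro: polyfun_deg.intros)

lemma polyfun_deg_imp_polyfun: "polyfun_deg n f \<Longrightarrow> polyfun f"
  by (induction rule: polyfun_deg.induct) (auto intro: polyfun.intros)

lemma polyfun_imp_polyfun_deg: "polyfun f \<Longrightarrow> \<exists>n. polyfun_deg n f"
proof (induction rule: polyfun.induct)
  case (add f g)
  then obtain a b where "polyfun_deg a f" "polyfun_deg b g" by blast
  then have "polyfun_deg (max a b) f" "polyfun_deg (max a b) g"
    by (auto elim: polyfun_deg_mono)
  then show ?case by (blast intro: polyfun_deg.add)
qed (blast intro: polyfun_deg.const polyfun_deg.lin[OF order_refl] polyfun_deg.mult)+

lemma polyfun_deg_0_const: "polyfun_deg 0 f \<Longrightarrow> f x = f y"
  by (induction "0::nat" f rule: polyfun_deg.induct) auto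

lemma polyfun_deg_sum:
  "(\<And>i. i \<in> S \<Longrightarrow> polyfun_deg n (f i)) \<Longrightarrow> polyfun_deg n (\<lambda>x. \<Sum>i\<in>S. f i x)"
  by (induction S rule: infinite_finite_induct) (simp_all add: polyfun_deg.const polyfun_deg.add)

lemma polyfun_deg_coeff_mult:
  assumes "\<And>y. degree (P y) \<le> a" "\<And>y. degree (Q y) \<le> b"
    and "\<And>i. polyfun_deg (a - i) (\<lambda>y. coeff (P y) i)" "\<And>i. polyfun_deg (b - i) (\<lambda>y. coeff (Q y) i)"
  shows "polyfun_deg (a + b - j) (\<lambda>y. coeff (P y * Q y) j)"
  unfolding coeff_mult
proof (rule polyfun_deg_sum)
  fix i assume i: "i \<in> {..j}"
  show "polyfun_deg (a + b - j) (\<lambda>y. coeff (P y) i * coeff (Q y) (j - i))"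
  proof (cases "i \<le> a \<and> j - i \<le> b")
    case True
    then have "polyfun_deg (a - i + (b - (j - i))) (\<lambda>y. coeff (P y) i * coeff (Q y) (j - i))"
      by (intro polyfun_deg.mult assms(3,4))
    moreover have "a - i + (b - (j - i)) = a + b - j"
      using True i by auto
    ultimately show ?thesis by simp
  next
    case False
    then have "degree (P y) < i \<or> degree (Q y) < j - i" for y
      using assms(1,2)[of y] by linarith
    then have "(\<lambda>y. coeff (P y) i * coeff (Q y) (j - i)) = (\<lambda>y. 0)"
      by (metis coeff_eq_0 mult_eq_0_iff)
    then show ?thesis
      by (simp add: polyfun_deg.const)
  qed
qed

lemma polyfun_deg_coeff_mult_homogeneous:
  assumes "\<And>i. polyfun_deg i (\<lambda>v. coeff (P v) i)" "\<And>i. polyfun_deg i (\<lambda>v. coeff (Q v) i)"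
  shows "polyfun_deg j (\<lambda>v. coeff (P v * Q v) j)"
  unfolding coeff_mult
proof (rule polyfun_deg_sum)
  fix i assume "i \<in> {..j}"
  then show "polyfun_deg j (\<lambda>v. coeff (P v) i * coeff (Q v) (j - i))"
    using polyfun_deg.mult[OF assms(1)[of i] assms(2)[of "j - i"]] by simp
qed

lemma polyfun_deg_line_poly:
  assumes "polyfun_deg n f"
  shows "\<forall>v y j. degree (line_poly v f y) \<le> n \<and> polyfun_deg (n - j) (\<lambda>y. coeff (line_poly v f y) j)
    \<and> polyfun_deg j (\<lambda>v. coeff (line_poly v f y) j)"
  using assms
proof (induction rule: polyfun_deg.induct)
  case (const n c)
  show ?case
    by (simp add: line_poly_const coeff_pCons_0 polyfun_deg.const split: nat.split)
next
  case (lin n b)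
  have "polyfun_deg (n - j) (\<lambda>y. coeff [:y \<bullet> b, v \<bullet> b:] j)
    \<and> polyfun_deg j (\<lambda>v. coeff [:y \<bullet> b, v \<bullet> b:] j)" for v y :: 'a and j
  proof (cases j)
    case (Suc i)
    then show ?thesis by (cases i) (simp_all add: polyfun_deg.intros)
  qed (use lin in \<open>simp add: polyfun_deg.intros\<close>)
  with lin show ?case
    by (simp add: line_poly_inner)
next
  case (add n f g)
  then show ?case
    by (simp add: line_poly_add polyfun_deg_imp_polyfun degree_add_le polyfun_deg.add)
next
  case (mult a f b g)
  have fg: "polyfun f" "polyfun g"
    using mult.hyps by (auto dest: polyfun_deg_imp_polyfun)
  have deg: "degree (line_poly v f y * line_poly v g y) \<le> a + b" for v y
    using mult.IH by (meson add_mono degree_mult_le order_trans)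
  have "polyfun_deg (a + b - j) (\<lambda>y. coeff (line_poly v f y * line_poly v g y) j)" for v j
    by (rule polyfun_deg_coeff_mult) (use mult.IH in auto)
  moreover have "polyfun_deg j (\<lambda>v. coeff (line_poly v f y * line_poly v g y) j)" for y j
    by (rule polyfun_deg_coeff_mult_homogeneous) (use mult.IH in auto)
  ultimately show ?case
    using deg by (simp add: line_poly_mult fg)
qed

definition polyfun_coeffs :: "('a::euclidean_space \<Rightarrow> real poly) \<Rightarrow> bool" where
  "polyfun_coeffs P \<longleftrightarrow> (\<forall>j. polyfun (\<lambda>y. coeff (P y) j))"

lemma polyfun_coeffs_line_poly: "polyfun f \<Longrightarrow> polyfun_coeffs (line_poly v f)"
  using polyfun_imp_polyfun_deg polyfun_deg_line_poly polyfun_deg_imp_polyfun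
  unfolding polyfun_coeffs_def by blast

lemma degree_line_poly_bounded: "polyfun f \<Longrightarrow> \<exists>E. \<forall>y. degree (line_poly v f y) \<le> E"
  using polyfun_imp_polyfun_deg polyfun_deg_line_poly by blast

lemma polyfun_deg_eq_sum_line_coeffs:
  assumes "polyfun_deg n f"
  shows "f v = (\<Sum>j\<le>n. coeff (line_poly v f 0) j)"
proof -
  have "f v = poly (line_poly v f 0) 1"
    using poly_line_poly[OF polyfun_deg_imp_polyfun[OF assms], of v 0 1] by simp
  also have "\<dots> = (\<Sum>j\<le>n. coeff (line_poly v f 0) j)"
    unfolding poly_altdef using polyfun_deg_line_poly[OF assms]
    by (auto intro!: sum.mono_neutral_left le_degree)
  finally show ?thesis .
qed

text \<open>Choose \<open>v\<close> at which the top homogeneous part of \<open>f\<close> does not vanish.\<close>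

lemma polyfun_direction_const_lead_coeff:
  assumes "polyfun f" "f \<noteq> (\<lambda>_. 0)"
  obtains v n h where "\<And>y. degree (line_poly v f y) = n" "\<And>y. lead_coeff (line_poly v f y) = h" "h \<noteq> 0"
proof -
  define n where "n = (LEAST n. polyfun_deg n f)"
  have n: "polyfun_deg n f"
    unfolding n_def using LeastI_ex[OF polyfun_imp_polyfun_deg[OF assms(1)]] .
  note L = polyfun_deg_line_poly[OF n, rule_format]
  show ?thesis
  proof (cases "\<exists>v. coeff (line_poly v f 0) n \<noteq> 0")
    case True
    then obtain v where v: "coeff (line_poly v f 0) n \<noteq> 0" by blast
    have top: "coeff (line_poly v f y) n = coeff (line_poly v f 0) n" for y
      using polyfun_deg_0_const L[of _ _ n] by fastforce
    have "degree (line_poly v f y) = n" for y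
    proof -
      have "coeff (line_poly v f y) n \<noteq> 0"
        using top v by metis
      then show ?thesis
        using L[of v y] by (meson le_antisym le_degree)
    qed
    with top v show ?thesis
      by (intro that) auto
  next
    case False
    have "f v = (\<Sum>j<n. coeff (line_poly v f 0) j)" for v
      using polyfun_deg_eq_sum_line_coeffs[OF n, of v] False by (simp add: lessThan_Suc_atMost[symmetric])
    then have f_eq: "f = (\<lambda>v. \<Sum>j<n. coeff (line_poly v f 0) j)" by blast
    have "n \<noteq> 0"
      using assms(2) f_eq by auto
    moreover have "polyfun_deg (n - 1) f"
    proof (subst f_eq, rule polyfun_deg_sum)
      fix j assume "j \<in> {..<n}"
      moreover have "polyfun_deg j (\<lambda>v. coeff (line_poly v f 0) j)"
        using L by blast
      ultimately show "polyfun_deg (n - 1) (\<lambda>v. coeff (line_poly v f 0) j)"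
        by (auto elim: polyfun_deg_mono)
    qed
    ultimately show ?thesis
      using not_less_Least[of "n - 1" "\<lambda>n. polyfun_deg n f"] unfolding n_def by simp
  qed
qed

section \<open>Division with a polynomial parameter\<close>

lemma polyfun_coeffs_add:
  "polyfun_coeffs A \<Longrightarrow> polyfun_coeffs B \<Longrightarrow> polyfun_coeffs (\<lambda>y. A y + B y)"
  by (simp add: polyfun_coeffs_def polyfun.add)

lemma polyfun_coeffs_minus:
  "polyfun_coeffs A \<Longrightarrow> polyfun_coeffs B \<Longrightarrow> polyfun_coeffs (\<lambda>y. A y - B y)"
  by (simp add: polyfun_coeffs_def polyfun_minus)

lemma polyfun_coeffs_monom: "polyfun c \<Longrightarrow> polyfun_coeffs (\<lambda>y. monom (c y) d)"
  by (simp add: polyfun_coeffs_def coeff_monom polyfun_If polyfun.const)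

lemma polyfun_coeffs_monom_mult:
  "polyfun c \<Longrightarrow> polyfun_coeffs B \<Longrightarrow> polyfun_coeffs (\<lambda>y. monom (c y) d * B y)"
  by (simp add: polyfun_coeffs_def coeff_monom_mult polyfun_If polyfun.const polyfun.mult)

lemma coeff_long_division_step:
  fixes A B :: "'a::field poly"
  assumes "B \<noteq> 0" "degree B \<le> E" "\<And>j. E < j \<Longrightarrow> coeff A j = 0" "E \<le> j"
  shows "coeff (A - monom (coeff A E / lead_coeff B) (E - degree B) * B) j = 0"
proof (cases "j = E")
  case True
  then show ?thesis
    using assms(1,2) by (simp add: coeff_monom_mult)
next
  case False
  with assms(2-4) have "coeff A j = 0" "coeff B (j - (E - degree B)) = 0"
    by (auto intro!: coeff_eq_0)
  then show ?thesis
    by (simp add: coeff_monom_mult)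
qed

text \<open>Long division by polynomials whose leading coefficient is a constant \<open>h \<noteq> 0\<close> only
  divides by \<open>h\<close>, so quotient and remainder inherit polynomial dependence on the parameter.\<close>

lemma polyfun_coeffs_div_mod:
  assumes B: "polyfun_coeffs B" "\<And>y. degree (B y) = n" "\<And>y. lead_coeff (B y) = h" "h \<noteq> 0"
    and A: "polyfun_coeffs A" "\<And>y j. E \<le> j \<Longrightarrow> coeff (A y) j = 0"
  shows "polyfun_coeffs (\<lambda>y. A y div B y) \<and> polyfun_coeffs (\<lambda>y. A y mod B y)"
proof -
  have B_nonzero: "B y \<noteq> 0" for y
    using B(3,4) by (metis coeff_0)
  show ?thesis
    using A
  proof (induction E arbitrary: A)
    case 0
    then have "A y = 0" for y
      by (simp add: poly_eq_iff)
    then show ?case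
      by (simp add: polyfun_coeffs_def polyfun.const)
  next
    case (Suc E)
    show ?case
    proof (cases "E < n")
      case True
      have "degree (A y) < degree (B y)" for y
      proof -
        have "degree (A y) \<le> E"
          using Suc.prems(2) by (intro degree_le) auto
        with True B(2) show ?thesis by simp
      qed
      then show ?thesis
        using Suc.prems(1) by (simp add: div_poly_less mod_poly_less polyfun_coeffs_def polyfun.const)
    next
      case False
      define c where "c y = coeff (A y) E / h" for y
      define A' where "A' y = A y - monom (c y) (E - n) * B y" for y
      have c: "polyfun c"
        using Suc.prems(1) unfolding c_def[abs_def] polyfun_coeffs_def by (simp add: polyfun_divide_const)
      have A': "polyfun_coeffs A'"
        unfolding A'_def by (intro polyfun_coeffs_minus polyfun_coeffs_monom_mult Suc.prems(1) c B(1))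
      have "coeff (A' y) j = 0" if "E \<le> j" for y j
        using coeff_long_division_step[of "B y" E "A y" j] B_nonzero B(2,3) False Suc.prems(2) that
        by (simp add: A'_def c_def)
      then have IH: "polyfun_coeffs (\<lambda>y. A' y div B y) \<and> polyfun_coeffs (\<lambda>y. A' y mod B y)"
        using Suc.IH A' by blast
      have "A y = A' y + monom (c y) (E - n) * B y" for y
        by (simp add: A'_def)
      then have "A y div B y = monom (c y) (E - n) + A' y div B y" "A y mod B y = A' y mod B y" for y
        using B_nonzero by simp_all
      then show ?thesis
        using IH by (simp add: polyfun_coeffs_add polyfun_coeffs_monom c)
    qed
  qed
qed

lemma polyfun_dvd_if_line_poly_dvd:
  assumes f: "polyfun f" and g: "polyfun g"
    and v: "\<And>y. degree (line_poly v f y) = n" "\<And>y. lead_coeff (line_poly v f y) = h" "h \<noteq> 0"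
    and F: "polyfun F" "F \<noteq> (\<lambda>_. 0)"
    and dvd: "\<And>y. F y \<noteq> 0 \<Longrightarrow> line_poly v f y dvd line_poly v g y"
  obtains r where "polyfun r" "\<And>x. g x = f x * r x"
proof -
  define B where "B = line_poly v f"
  define A where "A = line_poly v g"
  have B: "polyfun_coeffs B" "\<And>y. degree (B y) = n" "\<And>y. lead_coeff (B y) = h"
    using v polyfun_coeffs_line_poly[OF f] by (simp_all add: B_def)
  have div_mod: "polyfun_coeffs (\<lambda>y. A y div B y) \<and> polyfun_coeffs (\<lambda>y. A y mod B y)"
  proof -
    have "polyfun_coeffs A"
      unfolding A_def by (rule polyfun_coeffs_line_poly[OF g])
    moreover obtain E where E: "\<And>y. degree (A y) \<le> E"
      unfolding A_def using degree_line_poly_bounded[OF g] by blast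
    then have "coeff (A y) j = 0" if "Suc E \<le> j" for y j
      using that by (intro coeff_eq_0) (meson Suc_le_lessD le_less_trans)
    ultimately show ?thesis
      by (rule polyfun_coeffs_div_mod[OF B v(3)])
  qed
  have "(\<lambda>y. coeff (A y mod B y) j) = (\<lambda>_. 0)" for j
  proof (rule polyfun_eq_0_if_eq_0_where_nonzero[OF F(1) _ F(2)])
    show "polyfun (\<lambda>y. coeff (A y mod B y) j)"
      using div_mod unfolding polyfun_coeffs_def by blast
    show "coeff (A y mod B y) j = 0" if "F y \<noteq> 0" for y
      using dvd[OF that] by (simp add: A_def B_def)
  qed
  then have "B y dvd A y" for y
    by (metis poly_eqI coeff_0 mod_eq_0_iff_dvd)
  then have "g y = poly (B y * (A y div B y)) 0" for y
    by (simp add: A_def poly_line_poly_0 g)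
  then have "g y = f y * coeff (A y div B y) 0" for y
    by (simp add: B_def poly_line_poly_0 f flip: poly_0_coeff_0)
  moreover have "polyfun (\<lambda>y. coeff (A y div B y) 0)"
    using div_mod unfolding polyfun_coeffs_def by blast
  ultimately show ?thesis
    using that by blast
qed

section \<open>Divisibility forced by a linear recurrence\<close>

lemma multiplicity_minimum_index:
  fixes f :: "nat \<Rightarrow> 'a::factorial_semiring"
  assumes p: "prime p" and "f n \<noteq> 0"
  obtains m n0 where "f n0 \<noteq> 0" "multiplicity p (f n0) = m"
    "\<And>n. p ^ m dvd f n" "\<And>n. n < n0 \<Longrightarrow> p ^ Suc m dvd f n"
proof -
  have not_unit: "\<not> is_unit p"
    using p by (simp add: prime_def prime_elem_not_unit)
  define m where "m = (LEAST m. \<exists>n. f n \<noteq> 0 \<and> multiplicity p (f n) = m)"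
  have "\<exists>n. f n \<noteq> 0 \<and> multiplicity p (f n) = m"
    unfolding m_def by (rule LeastI_ex) (use assms in blast)
  define n0 where "n0 = (LEAST n. f n \<noteq> 0 \<and> multiplicity p (f n) = m)"
  have n0: "f n0 \<noteq> 0" "multiplicity p (f n0) = m"
    unfolding n0_def using LeastI_ex[OF \<open>\<exists>n. _\<close>] by auto
  have m_le: "m \<le> multiplicity p (f n)" if "f n \<noteq> 0" for n
    unfolding m_def using that by (intro Least_le) blast
  show ?thesis
  proof (rule that[OF n0])
    show "p ^ m dvd f n" for n
      using m_le[of n] multiplicity_dvd' by (cases "f n = 0") auto
    show "p ^ Suc m dvd f n" if "n < n0" for n
    proof (cases "f n = 0")
      case False
      then have "multiplicity p (f n) \<noteq> m"
        using not_less_Least[OF that[unfolded n0_def]] by blast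
      with m_le[OF False] show ?thesis
        by (intro multiplicity_dvd') simp
    qed simp
  qed
qed

text \<open>The heart of Gauss's lemma: in the product, only the term pairing the first entries of
  minimal \<open>p\<close>-adic valuation escapes divisibility by \<open>p ^ Suc (a + b)\<close>.\<close>

lemma prime_power_not_dvd_convolution:
  fixes A W :: "nat \<Rightarrow> 'a::{factorial_semiring, idom}"
  assumes p: "prime p"
    and A: "A j0 \<noteq> 0" "multiplicity p (A j0) = a" "\<And>j. p ^ a dvd A j" "\<And>j. j < j0 \<Longrightarrow> p ^ Suc a dvd A j"
    and W: "W n0 \<noteq> 0" "multiplicity p (W n0) = b" "\<And>n. p ^ b dvd W n" "\<And>n. n < n0 \<Longrightarrow> p ^ Suc b dvd W n"
  shows "\<not> p ^ Suc (a + b) dvd (\<Sum>j\<le>j0 + n0. A j * W (j0 + n0 - j))"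
proof
  let ?N = "j0 + n0"
  assume sum_dvd: "p ^ Suc (a + b) dvd (\<Sum>j\<le>?N. A j * W (?N - j))"
  have term_dvd: "p ^ Suc (a + b) dvd A j * W (?N - j)" if "j \<le> ?N" "j \<noteq> j0" for j
  proof (cases "j < j0")
    case True
    then show ?thesis
      using mult_dvd_mono[OF A(4)[OF True] W(3)[of "?N - j"]] by (simp add: power_add mult_ac)
  next
    case False
    with that have "?N - j < n0"
      by auto
    then show ?thesis
      using mult_dvd_mono[OF A(3)[of j] W(4)[of "?N - j"]] by (simp add: power_add mult_ac)
  qed
  have "p ^ Suc (a + b) dvd (\<Sum>j\<in>{..?N} - {j0}. A j * W (?N - j))"
    by (rule dvd_sum) (use term_dvd in auto)
  with sum_dvd have "p ^ Suc (a + b) dvd A j0 * W n0"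
    by (simp add: sum.remove[of "{..?N}" j0] dvd_add_left_iff)
  moreover have "multiplicity p (A j0 * W n0) = a + b"
    using prime_elem_multiplicity_mult_distrib[of p] p A(1,2) W(1,2) by simp
  ultimately show False
    using multiplicity_geI[of "A j0 * W n0" p "Suc (a + b)"] A(1) W(1) p
    by (simp add: prime_def prime_elem_not_unit)
qed

text \<open>In terms of power series: if \<open>W (k - 1)\<close> is the first nonzero term of a solution \<open>W\<close> of
  the recurrence, then \<open>\<Sum>n. W n z\<^sup>n\<close> times the reversed polynomial \<open>\<Sum>i\<le>k. q i z\<^sup>k\<^sup>-\<^sup>i\<close>
  is the monomial \<open>q k W (k - 1) z\<^sup>k\<^sup>-\<^sup>1\<close>.\<close>

lemma linear_recurrence_convolution:
  fixes q W :: "nat \<Rightarrow> 'a::comm_ring_1"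
  assumes k: "1 \<le> k" and W: "\<And>n. n < k - 1 \<Longrightarrow> W n = 0"
    and rec: "\<And>s. (\<Sum>i\<le>k. q i * W (i + s)) = 0"
  shows "(\<Sum>j\<le>N. (if j \<le> k then q (k - j) else 0) * W (N - j)) = (if N = k - 1 then q k * W (k - 1) else 0)"
proof (cases "k \<le> N")
  case True
  have "(\<Sum>j\<le>N. (if j \<le> k then q (k - j) else 0) * W (N - j)) = (\<Sum>j\<le>k. q (k - j) * W (N - j))"
    using True by (intro sum.mono_neutral_cong_right) auto
  also have "\<dots> = (\<Sum>i\<le>k. q i * W (i + (N - k)))"
    by (rule sum.reindex_bij_witness[of _ "\<lambda>i. k - i" "\<lambda>i. k - i"]) (use True in auto)
  also have "\<dots> = 0"
    by (rule rec)
  finally show ?thesis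
    using True k by simp
next
  case False
  have "(\<Sum>j\<le>N. (if j \<le> k then q (k - j) else 0) * W (N - j))
      = (\<Sum>j\<le>N. if j = 0 \<and> N = k - 1 then q k * W (k - 1) else 0)"
    using False W by (intro sum.cong) auto
  then show ?thesis
    by (cases "N = k - 1") (simp_all add: sum.delta)
qed

text \<open>By Gauss's lemma, applied to the product of the previous lemma, the valuation of \<open>q k\<close> at
  every prime is the least valuation of the \<open>q i\<close>.\<close>

lemma linear_recurrence_lead_coeff_dvd:
  fixes q W :: "nat \<Rightarrow> 'a::{factorial_semiring, idom}"
  assumes qk: "q k \<noteq> 0" and k: "1 \<le> k"
    and W: "\<And>n. n < k - 1 \<Longrightarrow> W n = 0" "W (k - 1) \<noteq> 0"
    and rec: "\<And>s. (\<Sum>i\<le>k. q i * W (i + s)) = 0"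
    and i: "i \<le> k"
  shows "q k dvd q i"
proof (cases "q i = 0")
  case False
  show ?thesis
  proof (rule multiplicity_le_imp_dvd[OF qk])
    fix p :: 'a
    assume p: "prime p"
    then have not_unit: "\<not> is_unit p"
      by (simp add: prime_def prime_elem_not_unit)
    define A where "A j = (if j \<le> k then q (k - j) else 0)" for j
    have conv: "(\<Sum>j\<le>N. A j * W (N - j)) = (if N = k - 1 then q k * W (k - 1) else 0)" for N
      unfolding A_def by (rule linear_recurrence_convolution[OF k W(1) rec])
    have A0: "A 0 \<noteq> 0"
      using qk by (simp add: A_def)
    obtain a j0 where a: "A j0 \<noteq> 0" "multiplicity p (A j0) = a"
        "\<And>j. p ^ a dvd A j" "\<And>j. j < j0 \<Longrightarrow> p ^ Suc a dvd A j"
      using multiplicity_minimum_index[of p A, OF p A0] by metis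
    obtain b n0 where b: "W n0 \<noteq> 0" "multiplicity p (W n0) = b"
        "\<And>n. p ^ b dvd W n" "\<And>n. n < n0 \<Longrightarrow> p ^ Suc b dvd W n"
      using multiplicity_minimum_index[of p W, OF p W(2)] by metis
    have "\<not> p ^ Suc (a + b) dvd (\<Sum>j\<le>j0 + n0. A j * W (j0 + n0 - j))"
      by (rule prime_power_not_dvd_convolution[of p A j0 a W n0 b, OF p a b])
    then have "j0 + n0 = k - 1" "\<not> p ^ Suc (a + b) dvd q k * W (k - 1)"
      unfolding conv by (auto split: if_splits)
    then have "multiplicity p (q k * W (k - 1)) < Suc (a + b)"
      using qk W(2) by (intro multiplicity_lessI[OF _ not_unit]) simp_all
    moreover have "multiplicity p (q k * W (k - 1)) = multiplicity p (q k) + multiplicity p (W (k - 1))"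
      using p qk W(2) by (simp add: prime_elem_multiplicity_mult_distrib)
    moreover have "b \<le> multiplicity p (W (k - 1))"
      by (rule multiplicity_geI[OF W(2) not_unit b(3)])
    moreover have "a \<le> multiplicity p (q i)"
      using multiplicity_geI[OF False not_unit] a(3)[of "k - i"] i by (simp add: A_def)
    ultimately show "multiplicity p (q k) \<le> multiplicity p (q i)"
      by linarith
  qed
qed simp

lemma line_poly_recurrence_lead_coeff_dvd:
  fixes q W :: "nat \<Rightarrow> 'a::euclidean_space \<Rightarrow> real"
  assumes q: "\<And>i. polyfun (q i)" and W: "\<And>n. polyfun (W n)"
    and k: "1 \<le> k" and W_0: "\<And>n. n < k - 1 \<Longrightarrow> W n = (\<lambda>_. 0)"
    and rec: "\<And>s x. (\<Sum>i\<le>k. q i x * W (i + s) x) = 0"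
    and y: "q k y \<noteq> 0" "W (k - 1) y \<noteq> 0" and i: "i \<le> k"
  shows "line_poly v (q k) y dvd line_poly v (q i) y"
proof (rule linear_recurrence_lead_coeff_dvd[where W = "\<lambda>n. line_poly v (W n) y", OF _ k _ _ _ i])
  show "line_poly v (q k) y \<noteq> 0"
    using y(1) poly_line_poly_0[OF q] by (metis poly_0)
  show "line_poly v (W (k - 1)) y \<noteq> 0"
    using y(2) poly_line_poly_0[OF W] by (metis poly_0)
  show "line_poly v (W n) y = 0" if "n < k - 1" for n
    using W_0[OF that] line_poly_const[of v 0 y] by simp
  show "(\<Sum>i\<le>k. line_poly v (q i) y * line_poly v (W (i + s)) y) = 0" for s
  proof -
    have "poly (\<Sum>i\<le>k. line_poly v (q i) y * line_poly v (W (i + s)) y) t = 0" for t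
      using rec[where s = s and x = "y + t *\<^sub>R v"] by (simp add: poly_sum poly_line_poly q W)
    then show ?thesis
      using poly_all_0_iff_0 by blast
  qed
qed

text \<open>Restrict to the lines in a direction along which \<open>q k\<close> has constant leading coefficient;
  on almost all of them the univariate divisibility holds.\<close>

lemma polyfun_recurrence_lead_coeff_dvd:
  fixes q W :: "nat \<Rightarrow> 'a::euclidean_space \<Rightarrow> real"
  assumes q: "\<And>i. polyfun (q i)" "q k \<noteq> (\<lambda>_. 0)"
    and W: "\<And>n. polyfun (W n)" "W (k - 1) \<noteq> (\<lambda>_. 0)"
    and k: "1 \<le> k" and W_0: "\<And>n. n < k - 1 \<Longrightarrow> W n = (\<lambda>_. 0)"
    and rec: "\<And>s x. (\<Sum>i\<le>k. q i x * W (i + s) x) = 0"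
  obtains r where "\<And>i. polyfun (r i)" "\<And>i x. i \<le> k \<Longrightarrow> q i x = q k x * r i x"
proof -
  obtain v n h where v: "\<And>y. degree (line_poly v (q k) y) = n"
      "\<And>y. lead_coeff (line_poly v (q k) y) = h" "h \<noteq> 0"
    using polyfun_direction_const_lead_coeff[OF q(1) q(2)] by blast
  have F: "polyfun (\<lambda>x. q k x * W (k - 1) x)" "(\<lambda>x. q k x * W (k - 1) x) \<noteq> (\<lambda>_. 0)"
    using q W by (simp_all add: polyfun.mult polyfun_mult_nonzero)
  have "\<exists>r. polyfun r \<and> (i \<le> k \<longrightarrow> (\<forall>x. q i x = q k x * r x))" for i
  proof (cases "i \<le> k")
    case True
    have "line_poly v (q k) y dvd line_poly v (q i) y" if "q k y * W (k - 1) y \<noteq> 0" for y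
      using line_poly_recurrence_lead_coeff_dvd[OF q(1) W(1) k W_0 rec _ _ True] that by simp
    then obtain r where "polyfun r" "\<And>x. q i x = q k x * r x"
      using polyfun_dvd_if_line_poly_dvd[OF q(1) q(1) v F] by blast
    then show ?thesis
      by blast
  qed (auto intro: polyfun.const)
  then obtain r where "\<forall>i. polyfun (r i) \<and> (i \<le> k \<longrightarrow> (\<forall>x. q i x = q k x * r i x))"
    by metis
  then show ?thesis
    using that by blast
qed

section \<open>Division-free Gram--Schmidt\<close>

text \<open>Stage \<open>i\<close> makes every vector orthogonal to the first \<open>i\<close> basis vectors
  \<open>gram_vec v l l\<close>; scaling by squared norms instead of dividing by them keeps all entries
  polynomial in the \<open>v i\<close>.\<close>

fun gram_vec :: "(nat \<Rightarrow> 'b::real_inner) \<Rightarrow> nat \<Rightarrow> nat \<Rightarrow> 'b" where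
  "gram_vec v j 0 = v j"
| "gram_vec v j (Suc i) = (gram_vec v i i \<bullet> gram_vec v i i) *\<^sub>R gram_vec v j i
    - (gram_vec v j i \<bullet> gram_vec v i i) *\<^sub>R gram_vec v i i"

definition gram_scale :: "(nat \<Rightarrow> 'b::real_inner) \<Rightarrow> nat \<Rightarrow> real" where
  "gram_scale v i = (\<Prod>l<i. gram_vec v l l \<bullet> gram_vec v l l)"

fun gram_coeff :: "(nat \<Rightarrow> 'b::real_inner) \<Rightarrow> nat \<Rightarrow> nat \<Rightarrow> nat \<Rightarrow> real" where
  "gram_coeff v j 0 l = 0"
| "gram_coeff v j (Suc i) l =
    (if l = i then - (gram_vec v j i \<bullet> gram_vec v i i) * gram_scale v i
     else (gram_vec v i i \<bullet> gram_vec v i i) * gram_coeff v j i l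
       - (gram_vec v j i \<bullet> gram_vec v i i) * gram_coeff v i i l)"

lemma gram_scale_0 [simp]: "gram_scale v 0 = 1"
  by (simp add: gram_scale_def)

lemma gram_scale_Suc: "gram_scale v (Suc i) = gram_scale v i * (gram_vec v i i \<bullet> gram_vec v i i)"
  by (simp add: gram_scale_def)

lemma gram_vec_expansion:
  "gram_vec v j i = gram_scale v i *\<^sub>R v j + (\<Sum>l<i. gram_coeff v j i l *\<^sub>R v l)"
proof (induction i arbitrary: j)
  case (Suc i)
  define N where "N = gram_vec v i i \<bullet> gram_vec v i i"
  define c where "c = gram_vec v j i \<bullet> gram_vec v i i"
  have "gram_vec v j (Suc i) = N *\<^sub>R gram_vec v j i - c *\<^sub>R gram_vec v i i"
    by (simp add: N_def c_def)
  also have "\<dots> = (gram_scale v i * N) *\<^sub>R v j + (- c * gram_scale v i) *\<^sub>R v i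
      + (\<Sum>l<i. (N * gram_coeff v j i l - c * gram_coeff v i i l) *\<^sub>R v l)"
    unfolding Suc.IH[of j] Suc.IH[of i]
    by (simp add: algebra_simps scaleR_sum_right sum_subtractf)
  also have "\<dots> = gram_scale v (Suc i) *\<^sub>R v j + (\<Sum>l<Suc i. gram_coeff v j (Suc i) l *\<^sub>R v l)"
    by (simp add: gram_scale_Suc N_def c_def add.commute)
  finally show ?case .
qed simp

lemma gram_vec_orthogonal: "l < i \<Longrightarrow> gram_vec v j i \<bullet> v l = 0"
proof (induction i arbitrary: j l)
  case (Suc i)
  have basis: "gram_vec v m i \<bullet> gram_vec v i i = gram_scale v i * (gram_vec v m i \<bullet> v i)" for m
    by (subst (2) gram_vec_expansion) (simp add: inner_add_right inner_sum_right Suc.IH)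
  show ?case
  proof (cases "l = i")
    case True
    then show ?thesis
      using basis[of i] basis[of j] by (simp add: inner_diff_left algebra_simps)
  next
    case False
    with Suc.prems show ?thesis
      by (simp add: inner_diff_left Suc.IH)
  qed
qed simp

lemma gram_vec_inner_basis:
  "gram_vec v j i \<bullet> gram_vec v i i = gram_scale v i * (gram_vec v j i \<bullet> v i)"
  by (subst (2) gram_vec_expansion) (simp add: inner_add_right inner_sum_right gram_vec_orthogonal)

lemma gram_basis_orthogonal: "m < l \<Longrightarrow> gram_vec v l l \<bullet> gram_vec v m m = 0"
  by (subst gram_vec_expansion[of v m m])
    (simp add: inner_add_right inner_sum_right gram_vec_orthogonal)

lemma gram_scale_nonzero_imp_independent:
  assumes "gram_scale v n \<noteq> 0" "(\<Sum>i<n. c i *\<^sub>R v i) = 0" "i < n"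
  shows "c i = 0"
  using assms
proof (induction n)
  case (Suc n)
  then have D: "gram_scale v n \<noteq> 0" and "gram_vec v n n \<bullet> gram_vec v n n \<noteq> 0"
    by (simp_all add: gram_scale_Suc)
  then have en: "gram_vec v n n \<bullet> v n \<noteq> 0"
    by (simp add: gram_vec_inner_basis)
  have "0 = gram_vec v n n \<bullet> (\<Sum>i<Suc n. c i *\<^sub>R v i)"
    by (simp only: Suc.prems(2) inner_zero_right)
  also have "\<dots> = c n * (gram_vec v n n \<bullet> v n)"
    by (simp add: inner_add_right inner_sum_right gram_vec_orthogonal)
  finally have "c n = 0"
    using en by simp
  with Suc.prems(2) have "(\<Sum>i<n. c i *\<^sub>R v i) = 0"
    by simp
  with D Suc.IH \<open>c n = 0\<close> Suc.prems(3) show ?case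
    using less_Suc_eq by auto
qed simp

lemma independent_imp_gram_scale_nonzero:
  assumes "\<And>c. (\<Sum>i<n. c i *\<^sub>R v i) = 0 \<Longrightarrow> \<forall>i<n. c i = 0"
  shows "gram_scale v n \<noteq> 0"
  using assms
proof (induction n)
  case (Suc n)
  have "gram_scale v n \<noteq> 0"
  proof (rule Suc.IH)
    fix c assume "(\<Sum>i<n. c i *\<^sub>R v i) = 0"
    then have "(\<Sum>i<Suc n. (c(n := 0)) i *\<^sub>R v i) = 0"
      by simp
    then show "\<forall>i<n. c i = 0"
      using Suc.prems by (metis fun_upd_other less_SucI less_irrefl)
  qed
  moreover have "gram_vec v n n \<noteq> 0"
  proof
    assume "gram_vec v n n = 0"
    then have "(\<Sum>i<Suc n. ((gram_coeff v n n)(n := gram_scale v n)) i *\<^sub>R v i) = 0"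
      using gram_vec_expansion[of v n n] by (simp add: add.commute)
    with Suc.prems \<open>gram_scale v n \<noteq> 0\<close> show False
      by (metis fun_upd_same lessI)
  qed
  ultimately show ?case
    by (simp add: gram_scale_Suc)
qed simp

lemma gram_scale_nonzero_iff:
  "gram_scale v n \<noteq> 0 \<longleftrightarrow> (\<forall>c. (\<Sum>i<n. c i *\<^sub>R v i) = 0 \<longrightarrow> (\<forall>i<n. c i = 0))"
  using gram_scale_nonzero_imp_independent independent_imp_gram_scale_nonzero by metis

lemma gram_scale_Suc_DIM: "gram_scale v (Suc DIM('b)) = 0"
  for v :: "nat \<Rightarrow> 'b::euclidean_space"
proof (rule ccontr)
  assume "gram_scale v (Suc DIM('b)) \<noteq> 0"
  then have nonzero: "gram_vec v l l \<noteq> 0" if "l \<le> DIM('b)" for l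
    using that by (auto simp: gram_scale_def prod_zero_iff lessThan_Suc_atMost)
  have orth: "gram_vec v l l \<bullet> gram_vec v m m = 0" if "l \<noteq> m" for l m
    using that gram_basis_orthogonal[of l m v] gram_basis_orthogonal[of m l v]
    by (cases "l < m") (auto simp: inner_commute)
  define S where "S = (\<lambda>l. gram_vec v l l) ` {..DIM('b)}"
  have "inj_on (\<lambda>l. gram_vec v l l) {..DIM('b)}"
    using nonzero orth by (auto intro!: inj_onI) (metis inner_eq_zero_iff)
  then have "card S = Suc DIM('b)"
    by (simp add: S_def card_image)
  moreover have "pairwise orthogonal S"
    unfolding S_def pairwise_def orthogonal_def by (auto intro!: orth)
  then have "independent S"
    using nonzero by (intro pairwise_orthogonal_independent) (auto simp: S_def)
  ultimately show False
    using independent_bound by fastforce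
qed

lemma A_set_eq_gram_scale: "A_set R j = {x. gram_scale (\<lambda>n. R n x) (Suc j) = 0}"
proof -
  have "x \<in> A_set R j \<longleftrightarrow> \<not> (\<forall>c. (\<Sum>i<Suc j. c i *\<^sub>R R i x) = 0 \<longrightarrow> (\<forall>i<Suc j. c i = 0))" for x
    by (auto simp: A_set_def lessThan_Suc_atMost less_Suc_eq_le)
  then show ?thesis
    unfolding gram_scale_nonzero_iff[symmetric] by blast
qed

lemma A_set_kmin: "A_set R (kmin R) = UNIV"
  for R :: "nat \<Rightarrow> 'a \<Rightarrow> 'b::euclidean_space"
proof -
  have "A_set R DIM('b) = UNIV"
    by (simp add: A_set_eq_gram_scale gram_scale_Suc_DIM)
  then show ?thesis
    unfolding kmin_def by (rule LeastI)
qed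

lemma gram_scale_Suc_kmin: "gram_scale (\<lambda>n. R n x) (Suc (kmin R)) = 0"
  for R :: "nat \<Rightarrow> 'a \<Rightarrow> 'b::euclidean_space"
  using A_set_kmin[of R] by (auto simp: A_set_eq_gram_scale)

lemma gram_scale_kmin_nonzero: "(\<lambda>x. gram_scale (\<lambda>n. R n x) (kmin R)) \<noteq> (\<lambda>_. 0)"
  for R :: "nat \<Rightarrow> 'a \<Rightarrow> 'b::euclidean_space"
proof (cases "kmin R")
  case (Suc k)
  then have "A_set R k \<noteq> UNIV"
    using not_less_Least[of k "\<lambda>k. A_set R k = UNIV"] by (simp add: kmin_def)
  then obtain x where "gram_scale (\<lambda>n. R n x) (kmin R) \<noteq> 0"
    using Suc by (auto simp: A_set_eq_gram_scale)
  then show ?thesis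
    by metis
qed (simp add: fun_eq_iff)

text \<open>Pairing with this vector, orthogonal to the \<open>R n\<close> with \<open>n < kmin R - 1\<close>, turns vector
  relations into scalar recurrences.\<close>

lemma gram_basis_inner_kmin_pred_nonzero:
  fixes R :: "nat \<Rightarrow> 'a \<Rightarrow> 'b::euclidean_space"
  assumes "kmin R \<noteq> 0"
  shows "(\<lambda>x. gram_vec (\<lambda>n. R n x) (kmin R - 1) (kmin R - 1) \<bullet> R (kmin R - 1) x) \<noteq> (\<lambda>_. 0)"
proof -
  obtain x where x: "gram_scale (\<lambda>n. R n x) (kmin R) \<noteq> 0"
    using gram_scale_kmin_nonzero[of R] by auto
  have "kmin R = Suc (kmin R - 1)"
    using assms by simp
  with x have "gram_scale (\<lambda>n. R n x) (Suc (kmin R - 1)) \<noteq> 0"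
    by metis
  then have "gram_vec (\<lambda>n. R n x) (kmin R - 1) (kmin R - 1) \<bullet> R (kmin R - 1) x \<noteq> 0"
    by (simp add: gram_scale_Suc gram_vec_inner_basis)
  then show ?thesis
    by metis
qed

lemma polyfun_vec_gram_vec:
  assumes "\<And>n. polyfun_vec (R n)"
  shows "polyfun_vec (\<lambda>x. gram_vec (\<lambda>n. R n x) j i)"
  by (induction i arbitrary: j) (simp_all add: assms polyfun_vec_minus polyfun_vec_scaleR polyfun_inner)

lemma polyfun_gram_scale:
  assumes "\<And>n. polyfun_vec (R n)"
  shows "polyfun (\<lambda>x. gram_scale (\<lambda>n. R n x) i)"
  unfolding gram_scale_def by (intro polyfun_prod polyfun_inner polyfun_vec_gram_vec assms)

lemma polyfun_gram_coeff:
  assumes "\<And>n. polyfun_vec (R n)"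
  shows "polyfun (\<lambda>x. gram_coeff (\<lambda>n. R n x) j i l)"
proof (induction i arbitrary: j)
  case (Suc i)
  have "polyfun (\<lambda>x. gram_vec (\<lambda>n. R n x) m i \<bullet> gram_vec (\<lambda>n. R n x) i i)" for m
    by (intro polyfun_inner polyfun_vec_gram_vec assms)
  with Suc.IH show ?case
    by (simp add: polyfun_If polyfun_minus polyfun_uminus polyfun.mult polyfun_gram_scale assms)
qed (simp add: polyfun.const)

text \<open>Off the zeros of the nonzero polynomial \<open>gram_scale\<close>, the \<open>R i\<close> with \<open>i < kmin R\<close> are
  independent.\<close>

lemma kmin_polyfun_independent:
  fixes R :: "nat \<Rightarrow> 'a::euclidean_space \<Rightarrow> 'b::euclidean_space"
  assumes R: "\<And>n. polyfun_vec (R n)" and c: "\<And>i. polyfun (c i)"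
    and rel: "\<And>x. (\<Sum>i<kmin R. c i x *\<^sub>R R i x) = 0" and i: "i < kmin R"
  shows "c i = (\<lambda>_. 0)"
proof (rule polyfun_eq_0_if_eq_0_where_nonzero[OF polyfun_gram_scale[OF R] c])
  show "(\<lambda>x. gram_scale (\<lambda>n. R n x) (kmin R)) \<noteq> (\<lambda>_. 0)"
    by (rule gram_scale_kmin_nonzero)
  show "c i x = 0" if "gram_scale (\<lambda>n. R n x) (kmin R) \<noteq> 0" for x
    by (rule gram_scale_nonzero_imp_independent[OF that rel i])
qed

lemma kmin_polyfun_independent_iff:
  fixes R :: "nat \<Rightarrow> 'a::euclidean_space \<Rightarrow> 'b::euclidean_space"
  assumes R: "\<And>n. polyfun_vec (R n)" and c: "\<And>i. i \<in> {1..kmin R} \<Longrightarrow> polyfun (c i)"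
  shows "(\<forall>x. (\<Sum>i\<in>{1..kmin R}. c i x *\<^sub>R R (kmin R - i) x) = 0) \<longleftrightarrow> (\<forall>i\<in>{1..kmin R}. c i = (\<lambda>_. 0))"
proof
  let ?k = "kmin R"
  assume rel: "\<forall>x. (\<Sum>i\<in>{1..?k}. c i x *\<^sub>R R (?k - i) x) = 0"
  define c' where "c' l = (if l < ?k then c (?k - l) else (\<lambda>_. 0))" for l
  have "polyfun (c' l)" for l
    using c[of "?k - l"] by (cases "l < ?k") (auto simp: c'_def polyfun.const)
  moreover have "(\<Sum>l<?k. c' l x *\<^sub>R R l x) = 0" for x
  proof -
    have "(\<Sum>l<?k. c' l x *\<^sub>R R l x) = (\<Sum>i\<in>{1..?k}. c i x *\<^sub>R R (?k - i) x)"
      by (rule sum.reindex_bij_witness[of _ "\<lambda>i. ?k - i" "\<lambda>l. ?k - l"]) (auto simp: c'_def)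
    with rel show ?thesis
      by simp
  qed
  ultimately have c'_0: "c' l = (\<lambda>_. 0)" if "l < ?k" for l
    using kmin_polyfun_independent[of R c', OF R] that by blast
  show "\<forall>i\<in>{1..?k}. c i = (\<lambda>_. 0)"
  proof
    fix i assume i: "i \<in> {1..?k}"
    then have "c' (?k - i) = (\<lambda>_. 0)"
      by (intro c'_0) auto
    with i show "c i = (\<lambda>_. 0)"
      by (simp add: c'_def)
  qed
qed simp

lemma gram_vec_kmin:
  fixes R :: "nat \<Rightarrow> 'a::euclidean_space \<Rightarrow> 'b::euclidean_space"
  assumes R: "\<And>n. polyfun_vec (R n)"
  shows "gram_vec (\<lambda>n. R n x) (kmin R) (kmin R) = 0"
proof -
  let ?e = "\<lambda>x. gram_vec (\<lambda>n. R n x) (kmin R) (kmin R)"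
  have "(\<lambda>x. ?e x \<bullet> ?e x) = (\<lambda>_. 0)"
  proof (rule polyfun_eq_0_if_eq_0_where_nonzero[OF polyfun_gram_scale[OF R]])
    show "polyfun (\<lambda>x. ?e x \<bullet> ?e x)"
      by (intro polyfun_inner polyfun_vec_gram_vec R)
    show "(\<lambda>x. gram_scale (\<lambda>n. R n x) (kmin R)) \<noteq> (\<lambda>_. 0)"
      by (rule gram_scale_kmin_nonzero)
    show "?e x \<bullet> ?e x = 0" if "gram_scale (\<lambda>n. R n x) (kmin R) \<noteq> 0" for x
      using that gram_scale_Suc_kmin[of R x] by (simp add: gram_scale_Suc)
  qed
  then show ?thesis
    by (metis inner_eq_zero_iff)
qed

lemma polyseqI:
  assumes "\<And>i. polyfun (c i)" "\<And>i. N \<le> i \<Longrightarrow> c i = (\<lambda>_. 0)"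
  shows "c \<in> polyseq"
proof -
  have "{i. c i \<noteq> (\<lambda>_. 0)} \<subseteq> {..<N}"
  proof
    fix i assume "i \<in> {i. c i \<noteq> (\<lambda>_. 0)}"
    then show "i \<in> {..<N}"
      using assms(2)[of i] by (cases "N \<le> i") auto
  qed
  then show ?thesis
    using assms(1) finite_subset unfolding polyseq_def by blast
qed

lemma polyseq_bounded:
  assumes "c \<in> polyseq"
  obtains N where "\<And>i. N \<le> i \<Longrightarrow> c i = (\<lambda>_. 0)"
proof -
  have "finite {i. c i \<noteq> (\<lambda>_. 0)}"
    using assms by (simp add: polyseq_def)
  then obtain N where "{i. c i \<noteq> (\<lambda>_. 0)} \<subseteq> {..<N}"
    using finite_nat_bounded by blast
  then have "c i = (\<lambda>_. 0)" if "N \<le> i" for i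
    using that by (force simp: subset_iff)
  then show ?thesis
    by (rule that)
qed

lemma Eval_eq_sum:
  assumes "\<And>i. N \<le> i \<Longrightarrow> c i = (\<lambda>_. 0)"
  shows "Eval R c x = (\<Sum>i<N. c i x *\<^sub>R R i x)"
  unfolding Eval_def using assms
  by (intro sum.mono_neutral_left) (auto simp: not_le[symmetric])

lemma Eval_minus:
  assumes "c \<in> polyseq" "d \<in> polyseq"
  shows "Eval R (\<lambda>i x. c i x - d i x) x = Eval R c x - Eval R d x"
proof -
  obtain M N where "\<And>i. M \<le> i \<Longrightarrow> c i = (\<lambda>_. 0)" "\<And>i. N \<le> i \<Longrightarrow> d i = (\<lambda>_. 0)"
    using polyseq_bounded assms by metis
  then have bound: "c i = (\<lambda>_. 0)" "d i = (\<lambda>_. 0)" if "max M N \<le> i" for i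
    using that by simp_all
  have "Eval R c x = (\<Sum>i<max M N. c i x *\<^sub>R R i x)"
    and "Eval R d x = (\<Sum>i<max M N. d i x *\<^sub>R R i x)"
    and "Eval R (\<lambda>i x. c i x - d i x) x = (\<Sum>i<max M N. (c i x - d i x) *\<^sub>R R i x)"
    by (rule Eval_eq_sum; use bound in simp)+
  then show ?thesis
    by (simp add: scaleR_diff_left sum_subtractf)
qed

lemma Kern_Eval_minus:
  assumes "c \<in> Kern_Eval R" "d \<in> Kern_Eval R"
  shows "(\<lambda>i x. c i x - d i x) \<in> Kern_Eval R"
proof -
  have cd: "c \<in> polyseq" "d \<in> polyseq"
    using assms by (simp_all add: Kern_Eval_def)
  then obtain M N where "\<And>i. M \<le> i \<Longrightarrow> c i = (\<lambda>_. 0)" "\<And>i. N \<le> i \<Longrightarrow> d i = (\<lambda>_. 0)"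
    using polyseq_bounded by metis
  then have "(\<lambda>i x. c i x - d i x) \<in> polyseq"
    using cd by (intro polyseqI[of _ "max M N"]) (simp_all add: polyseq_def polyfun_minus)
  moreover have "Eval R (\<lambda>i x. c i x - d i x) x = 0" for x
  proof -
    have "Eval R c x = 0" "Eval R d x = 0"
      using assms by (simp_all add: Kern_Eval_def)
    then show ?thesis
      by (simp add: Eval_minus[OF cd])
  qed
  ultimately show ?thesis
    by (simp add: Kern_Eval_def fun_eq_iff)
qed

lemma polyfun_vec_Eval:
  "c \<in> polyseq \<Longrightarrow> (\<And>n. polyfun_vec (R n)) \<Longrightarrow> polyfun_vec (Eval R c)"
  unfolding Eval_def polyseq_def by (intro polyfun_vec_sum polyfun_vec_scaleR) auto

definition pmonom :: "nat \<Rightarrow> ('a \<Rightarrow> real) \<Rightarrow> nat \<Rightarrow> 'a \<Rightarrow> real" where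
  "pmonom s a = (\<lambda>i x. if i = s then a x else 0)"

lemma polyfun_pmonom: "polyfun a \<Longrightarrow> polyfun (pmonom s a i)"
  by (cases "i = s") (simp_all add: pmonom_def polyfun.const)

lemma pmonom_polyseq: "polyfun a \<Longrightarrow> pmonom s a \<in> polyseq"
  by (rule polyseqI[of _ "Suc s"], erule polyfun_pmonom) (simp add: pmonom_def fun_eq_iff)

lemma pmul_pmonom: "pmul (pmonom s a) c n x = (if s \<le> n then a x * c (n - s) x else 0)"
proof -
  have "pmul (pmonom s a) c n x = (\<Sum>i\<le>n. if i = s then a x * c (n - i) x else 0)"
    unfolding pmul_def pmonom_def by (intro sum.cong) auto
  then show ?thesis
    by (simp add: sum.delta)
qed

lemma Kern_Eval_shift:
  assumes I: "is_ideal (Kern_Eval R)" and c: "c \<in> Kern_Eval R" and k: "\<And>i. k < i \<Longrightarrow> c i = (\<lambda>_. 0)"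
  shows "(\<Sum>i\<le>k. c i x *\<^sub>R R (i + s) x) = 0"
proof -
  have "pmul (pmonom s (\<lambda>_. 1)) c \<in> Kern_Eval R"
    using I c pmonom_polyseq[OF polyfun.const] unfolding is_ideal_def by blast
  then have "0 = Eval R (pmul (pmonom s (\<lambda>_. 1)) c) x"
    by (simp add: Kern_Eval_def)
  also have "\<dots> = (\<Sum>n<Suc k + s. pmul (pmonom s (\<lambda>_. 1)) c n x *\<^sub>R R n x)"
    using k by (intro Eval_eq_sum) (auto simp: pmul_pmonom fun_eq_iff)
  also have "\<dots> = (\<Sum>n<Suc k + s. (if s \<le> n then c (n - s) x else 0) *\<^sub>R R n x)"
    by (intro sum.cong) (simp_all add: pmul_pmonom)
  also have "\<dots> = (\<Sum>n\<in>{s..<Suc k + s}. c (n - s) x *\<^sub>R R n x)"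
    by (intro sum.mono_neutral_cong_right) auto
  also have "\<dots> = (\<Sum>i\<le>k. c i x *\<^sub>R R (i + s) x)"
    by (rule sum.reindex_bij_witness[of _ "\<lambda>i. i + s" "\<lambda>n. n - s"]) auto
  finally show ?thesis by simp
qed

lemma monic_seq_polyseq:
  assumes "\<And>i. i \<in> {1..k} \<Longrightarrow> polyfun (r i)"
  shows "monic_seq k r \<in> polyseq"
proof (rule polyseqI[of _ "Suc k"])
  show "polyfun (monic_seq k r j)" for j
    using assms[of "k - j"] by (cases "j < k"; cases "j = k") (auto simp: monic_seq_def polyfun.const)
qed (simp add: monic_seq_def fun_eq_iff)

lemma Eval_monic_seq: "Eval R (monic_seq k r) x = R k x + (\<Sum>i\<in>{1..k}. r i x *\<^sub>R R (k - i) x)"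
proof -
  have "Eval R (monic_seq k r) x = (\<Sum>j<Suc k. monic_seq k r j x *\<^sub>R R j x)"
    by (rule Eval_eq_sum) (auto simp: monic_seq_def fun_eq_iff)
  also have "\<dots> = R k x + (\<Sum>j<k. r (k - j) x *\<^sub>R R j x)"
    by (simp add: monic_seq_def)
  also have "(\<Sum>j<k. r (k - j) x *\<^sub>R R j x) = (\<Sum>i\<in>{1..k}. r i x *\<^sub>R R (k - i) x)"
    by (rule sum.reindex_bij_witness[of _ "\<lambda>i. k - i" "\<lambda>j. k - j"]) auto
  finally show ?thesis .
qed

lemma polyfun_pmul: "(\<And>i. polyfun (d i)) \<Longrightarrow> (\<And>i. polyfun (c i)) \<Longrightarrow> polyfun (pmul d c n)"
  unfolding pmul_def by (intro polyfun_sum polyfun.mult) auto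

lemma pmul_padd_left: "pmul (padd d e) c = padd (pmul d c) (pmul e c)"
  by (simp add: pmul_def padd_def fun_eq_iff distrib_right sum.distrib)

lemma padd_polyseq: "d \<in> polyseq \<Longrightarrow> e \<in> polyseq \<Longrightarrow> padd d e \<in> polyseq"
proof -
  assume d: "d \<in> polyseq" and e: "e \<in> polyseq"
  obtain M N where "\<And>i. M \<le> i \<Longrightarrow> d i = (\<lambda>_. 0)" "\<And>i. N \<le> i \<Longrightarrow> e i = (\<lambda>_. 0)"
    using polyseq_bounded d e by metis
  with d e show ?thesis
    by (intro polyseqI[of _ "max M N"]) (auto simp: padd_def polyseq_def polyfun.add)
qed

lemma monic_division_step:
  assumes P: "P \<in> polyseq" "P k = (\<lambda>_. 1)" "\<And>i. k < i \<Longrightarrow> P i = (\<lambda>_. 0)"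
    and c: "c \<in> polyseq" "\<And>i. Suc N \<le> i \<Longrightarrow> c i = (\<lambda>_. 0)" and N: "k \<le> N"
  defines "c' \<equiv> \<lambda>i x. c i x - pmul (pmonom (N - k) (c N)) P i x"
  shows "c' \<in> polyseq" "\<And>i. N \<le> i \<Longrightarrow> c' i = (\<lambda>_. 0)"
proof -
  show c'_0: "c' i = (\<lambda>_. 0)" if "N \<le> i" for i
  proof (cases "i = N")
    case True
    then show ?thesis
      using N P(2) by (simp add: c'_def pmul_pmonom fun_eq_iff)
  next
    case False
    with that N have "c i = (\<lambda>_. 0)" "k < i - (N - k)"
      using c(2) by auto
    then show ?thesis
      using P(3) by (simp add: c'_def pmul_pmonom fun_eq_iff)
  qed
  have c_poly: "polyfun (c i)" for i
    using c(1) by (simp add: polyseq_def)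
  have "polyfun (pmul (pmonom (N - k) (c N)) P i)" for i
    using P(1) by (intro polyfun_pmul polyfun_pmonom c_poly) (simp add: polyseq_def)
  with c'_0 c_poly show "c' \<in> polyseq"
    by (intro polyseqI[of _ N]) (simp_all add: c'_def polyfun_minus)
qed

lemma monic_division:
  assumes P: "P \<in> polyseq" "P k = (\<lambda>_. 1)" "\<And>i. k < i \<Longrightarrow> P i = (\<lambda>_. 0)" and c: "c \<in> polyseq"
  obtains d where "d \<in> polyseq" "\<And>i x. k \<le> i \<Longrightarrow> c i x = pmul d P i x"
proof -
  have "\<exists>d\<in>polyseq. \<forall>i\<ge>k. \<forall>x. c i x = pmul d P i x"
    if "c \<in> polyseq" "\<And>i. N \<le> i \<Longrightarrow> c i = (\<lambda>_. 0)" for N c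
    using that
  proof (induction N arbitrary: c)
    case 0
    show ?case
      by (rule bexI[OF _ "0.prems"(1)]) (simp add: pmul_def "0.prems"(2))
  next
    case (Suc N)
    show ?case
    proof (cases "N < k")
      case True
      then have "c i x = pmul pzero P i x" if "k \<le> i" for i x
        using that Suc.prems(2)[of i] by (simp add: pmul_def pzero_def)
      moreover have "pzero \<in> polyseq"
        by (rule polyseqI[of _ 0]) (simp_all add: pzero_def polyfun.const)
      ultimately show ?thesis
        by blast
    next
      case False
      define e where "e = pmonom (N - k) (c N)"
      have e: "e \<in> polyseq"
        unfolding e_def using Suc.prems(1) by (intro pmonom_polyseq) (simp add: polyseq_def)
      have "k \<le> N"
        using False by simp
      note step = monic_division_step[OF P Suc.prems this]
      obtain d' where d': "d' \<in> polyseq" "\<forall>i\<ge>k. \<forall>x. c i x - pmul e P i x = pmul d' P i x"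
        using Suc.IH[OF step] unfolding e_def by blast
      have "c i x = pmul (padd d' e) P i x" if "k \<le> i" for i x
        using d'(2) that unfolding pmul_padd_left by (simp add: padd_def diff_eq_eq)
      then show ?thesis
        using padd_polyseq[OF d'(1) e] by blast
    qed
  qed
  then show ?thesis
    using polyseq_bounded[OF c] c that by metis
qed

section \<open>The minimal polynomial\<close>

lemma kmin_relation:
  fixes R :: "nat \<Rightarrow> 'a::euclidean_space \<Rightarrow> 'b::euclidean_space"
  assumes R: "\<And>n. polyfun_vec (R n)"
  obtains q where "q \<in> Kern_Eval R" "q (kmin R) \<noteq> (\<lambda>_. 0)" "\<And>i. kmin R < i \<Longrightarrow> q i = (\<lambda>_. 0)"
proof -
  let ?k = "kmin R"
  define q where "q = (\<lambda>j x. if j < ?k then gram_coeff (\<lambda>n. R n x) ?k ?k j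
    else if j = ?k then gram_scale (\<lambda>n. R n x) ?k else 0)"
  have q_k: "q ?k \<noteq> (\<lambda>_. 0)"
    using gram_scale_kmin_nonzero[of R] by (simp add: q_def)
  have q_0: "q j = (\<lambda>_. 0)" if "?k < j" for j
    using that by (simp add: q_def fun_eq_iff)
  have "q \<in> polyseq"
    using q_0 by (intro polyseqI[of _ "Suc ?k"])
      (auto simp: q_def polyfun_If polyfun_gram_coeff polyfun_gram_scale R polyfun.const)
  moreover have "Eval R q x = 0" for x
  proof -
    have "Eval R q x = (\<Sum>j<Suc ?k. q j x *\<^sub>R R j x)"
      using q_0 by (intro Eval_eq_sum) auto
    also have "\<dots> = gram_vec (\<lambda>n. R n x) ?k ?k"
      by (simp add: gram_vec_expansion[of _ ?k ?k] q_def add.commute)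
    finally show ?thesis
      using gram_vec_kmin[OF R] by simp
  qed
  ultimately have "q \<in> Kern_Eval R"
    by (simp add: Kern_Eval_def fun_eq_iff)
  then show ?thesis
    using q_k q_0 by (rule that)
qed

lemma kmin_relation_lead_coeff_dvd:
  fixes R :: "nat \<Rightarrow> 'a::euclidean_space \<Rightarrow> 'b::euclidean_space"
  assumes R: "\<And>n. polyfun_vec (R n)" and I: "is_ideal (Kern_Eval R)"
    and q: "q \<in> Kern_Eval R" "q (kmin R) \<noteq> (\<lambda>_. 0)" "\<And>i. kmin R < i \<Longrightarrow> q i = (\<lambda>_. 0)"
  obtains r where "\<And>i. polyfun (r i)" "\<And>i x. i \<le> kmin R \<Longrightarrow> q i x = q (kmin R) x * r i x"
proof (cases "kmin R = 0")
  case True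
  show ?thesis
    by (rule that[of "\<lambda>_ _. 1"]) (use True in \<open>simp_all add: polyfun.const\<close>)
next
  case False
  let ?k = "kmin R"
  let ?e = "\<lambda>x. gram_vec (\<lambda>n. R n x) (?k - 1) (?k - 1)"
  define W where "W = (\<lambda>n x. ?e x \<bullet> R n x)"
  have W: "polyfun (W n)" for n
    unfolding W_def by (intro polyfun_inner polyfun_vec_gram_vec R)
  have W_0: "W n = (\<lambda>_. 0)" if "n < ?k - 1" for n
  proof
    fix x
    show "W n x = 0"
      using gram_vec_orthogonal[of n "?k - 1" "\<lambda>m. R m x"] that by (simp add: W_def)
  qed
  have W_k: "W (?k - 1) \<noteq> (\<lambda>_. 0)"
    unfolding W_def by (rule gram_basis_inner_kmin_pred_nonzero[OF False])
  have rec: "(\<Sum>i\<le>?k. q i x * W (i + s) x) = 0" for s x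
  proof -
    have "(\<Sum>i\<le>?k. q i x * W (i + s) x) = ?e x \<bullet> (\<Sum>i\<le>?k. q i x *\<^sub>R R (i + s) x)"
      by (simp add: W_def inner_sum_right)
    then show ?thesis
      using Kern_Eval_shift[OF I q(1) q(3)] by simp
  qed
  have "polyfun (q i)" for i
    using q(1) by (simp add: Kern_Eval_def polyseq_def)
  moreover have "1 \<le> ?k"
    using False by simp
  ultimately obtain r where "\<And>i. polyfun (r i)" "\<And>i x. i \<le> ?k \<Longrightarrow> q i x = q ?k x * r i x"
    using polyfun_recurrence_lead_coeff_dvd[of q ?k W] q(2) W W_k W_0 rec by blast
  then show ?thesis
    by (rule that)
qed

lemma kmin_monic_relation:
  fixes R :: "nat \<Rightarrow> 'a::euclidean_space \<Rightarrow> 'b::euclidean_space"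
  assumes R: "\<And>n. polyfun_vec (R n)" and I: "is_ideal (Kern_Eval R)"
  obtains r where "\<And>i. polyfun (r i)" "monic_seq (kmin R) r \<in> Kern_Eval R"
proof -
  let ?k = "kmin R"
  obtain q where q: "q \<in> Kern_Eval R" "q ?k \<noteq> (\<lambda>_. 0)" "\<And>i. ?k < i \<Longrightarrow> q i = (\<lambda>_. 0)"
    using kmin_relation[of R, OF R] by blast
  obtain r where r: "\<And>i. polyfun (r i)" "\<And>i x. i \<le> ?k \<Longrightarrow> q i x = q ?k x * r i x"
    using kmin_relation_lead_coeff_dvd[OF R I q] by blast
  define P where "P = monic_seq ?k (\<lambda>i. r (?k - i))"
  have P: "P \<in> polyseq"
    unfolding P_def by (intro monic_seq_polyseq r)
  have q_P: "q ?k x * P j x = q j x" if "j \<le> ?k" for j x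
    using that r(2)[of j x] by (cases "j = ?k") (auto simp: P_def monic_seq_def)
  have scaled: "q ?k x *\<^sub>R Eval R P x = 0" for x
  proof -
    have "Eval R P x = (\<Sum>j<Suc ?k. P j x *\<^sub>R R j x)"
      by (rule Eval_eq_sum) (simp add: P_def monic_seq_def fun_eq_iff)
    then have "q ?k x *\<^sub>R Eval R P x = (\<Sum>j<Suc ?k. (q ?k x * P j x) *\<^sub>R R j x)"
      by (simp only: scaleR_sum_right scaleR_scaleR)
    also have "\<dots> = (\<Sum>j<Suc ?k. q j x *\<^sub>R R j x)"
      by (intro sum.cong refl) (simp add: q_P)
    also have "\<dots> = Eval R q x"
      by (rule Eval_eq_sum[symmetric]) (simp add: q(3))
    finally show ?thesis
      using q(1) by (simp add: Kern_Eval_def)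
  qed
  have "polyfun (q ?k)"
    using q(1) by (simp add: Kern_Eval_def polyseq_def)
  moreover have "polyfun_vec (Eval R P)"
    using P R by (rule polyfun_vec_Eval)
  ultimately have "Eval R P = (\<lambda>_. 0)"
    by (rule polyfun_vec_eq_0_if_eq_0_where_nonzero[OF _ _ q(2)]) (metis scaled scaleR_eq_0_iff)
  with P r(1) show ?thesis
    by (intro that[of "\<lambda>i. r (?k - i)"]) (simp_all add: Kern_Eval_def P_def)
qed

lemma Kern_Eval_eq_multiples:
  fixes R :: "nat \<Rightarrow> 'a::euclidean_space \<Rightarrow> 'b::euclidean_space"
  assumes R: "\<And>n. polyfun_vec (R n)" and I: "is_ideal (Kern_Eval R)"
    and P: "monic_seq (kmin R) r \<in> Kern_Eval R"
  shows "Kern_Eval R = {pmul d (monic_seq (kmin R) r) | d. d \<in> polyseq}"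
proof (intro set_eqI iffI)
  fix c
  assume "c \<in> {pmul d (monic_seq (kmin R) r) | d. d \<in> polyseq}"
  with I P show "c \<in> Kern_Eval R"
    unfolding is_ideal_def by blast
next
  let ?k = "kmin R" and ?P = "monic_seq (kmin R) r"
  fix c
  assume c: "c \<in> Kern_Eval R"
  have P_seq: "?P \<in> polyseq" and c_seq: "c \<in> polyseq"
    using P c by (simp_all add: Kern_Eval_def)
  have P_top: "?P ?k = (\<lambda>_. 1)" "\<And>i. ?k < i \<Longrightarrow> ?P i = (\<lambda>_. 0)"
    by (simp_all add: monic_seq_def fun_eq_iff)
  obtain d where d: "d \<in> polyseq" "\<And>i x. ?k \<le> i \<Longrightarrow> c i x = pmul d ?P i x"
    using monic_division[OF P_seq P_top c_seq] by blast
  define e where "e = (\<lambda>i x. c i x - pmul d ?P i x)"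
  have "pmul d ?P \<in> Kern_Eval R"
    using I d(1) P unfolding is_ideal_def by blast
  then have e: "e \<in> Kern_Eval R"
    unfolding e_def using c by (rule Kern_Eval_minus[rotated])
  have e_high: "e i = (\<lambda>_. 0)" if "?k \<le> i" for i
    using d(2) that by (simp add: e_def fun_eq_iff)
  have "(\<Sum>i<?k. e i x *\<^sub>R R i x) = Eval R e x" for x
    by (rule Eval_eq_sum[symmetric]) (rule e_high)
  then have "(\<Sum>i<?k. e i x *\<^sub>R R i x) = 0" for x
    using e by (simp add: Kern_Eval_def)
  moreover have "polyfun (e i)" for i
    using e by (simp add: Kern_Eval_def polyseq_def)
  ultimately have "e i = (\<lambda>_. 0)" if "i < ?k" for i
    using kmin_polyfun_independent[of R e, OF R] that by blast
  with e_high have "e i = (\<lambda>_. 0)" for i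
    by (cases "i < ?k") simp_all
  then have "c = pmul d ?P"
    by (simp add: e_def fun_eq_iff)
  with d(1) show "c \<in> {pmul d ?P | d. d \<in> polyseq}"
    by blast
qed

text \<open>Substituting the monic relation for \<open>R k\<close> into the relation with cleared denominators.\<close>

lemma minrel_iff_relation:
  assumes R_k: "\<And>x. R k x = - (\<Sum>i\<in>{1..k}. r i x *\<^sub>R R (k - i) x)"
  shows "minrel R k a \<longleftrightarrow> (\<forall>x. (\<Sum>i\<in>{1..k}. ((\<Prod>j\<in>{1..k} - {i}. snd (a j) x)
      * (fst (a i) x - r i x * snd (a i) x)) *\<^sub>R R (k - i) x) = 0)"
proof -
  let ?q = "\<lambda>i. snd (a i)" and ?Q = "\<lambda>i x. \<Prod>j\<in>{1..k} - {i}. snd (a j) x"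
  have "(\<Prod>j\<in>{1..k}. ?q j x) *\<^sub>R R k x + (\<Sum>i\<in>{1..k}. (fst (a i) x * ?Q i x) *\<^sub>R R (k - i) x)
      = (\<Sum>i\<in>{1..k}. (fst (a i) x * ?Q i x - (\<Prod>j\<in>{1..k}. ?q j x) * r i x) *\<^sub>R R (k - i) x)" for x
    unfolding R_k by (simp add: scaleR_sum_right scaleR_diff_left sum_subtractf)
  also have "\<dots> x = (\<Sum>i\<in>{1..k}. (?Q i x * (fst (a i) x - r i x * ?q i x)) *\<^sub>R R (k - i) x)" for x
    by (intro sum.cong refl) (simp add: prod.remove algebra_simps)
  finally show ?thesis
    by (simp add: minrel_def)
qed

lemma minrel_iff:
  fixes R :: "nat \<Rightarrow> 'a::euclidean_space \<Rightarrow> 'b::euclidean_space"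
  assumes R: "\<And>n. polyfun_vec (R n)" and r: "\<And>i. polyfun (r i)"
    and P: "monic_seq (kmin R) r \<in> Kern_Eval R"
    and a: "\<forall>i\<in>{1..kmin R}. ratfun (a i)"
  shows "minrel R (kmin R) a \<longleftrightarrow> (\<forall>i\<in>{1..kmin R}. fst (a i) = (\<lambda>x. r i x * snd (a i) x))"
proof -
  let ?k = "kmin R"
  define Q where "Q i x = (\<Prod>j\<in>{1..?k} - {i}. snd (a j) x)" for i x
  have pq: "polyfun (fst (a i))" "polyfun (snd (a i))" "snd (a i) \<noteq> (\<lambda>_. 0)" if "i \<in> {1..?k}" for i
    using a that by (auto simp: ratfun_def)
  have Q: "polyfun (Q i)" "Q i \<noteq> (\<lambda>_. 0)" for i
  proof -
    have nonzero: "polyfun (snd (a j)) \<and> snd (a j) \<noteq> (\<lambda>_. 0)" if "j \<in> {1..?k} - {i}" for j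
      using pq that by blast
    show "polyfun (Q i)"
      unfolding Q_def[abs_def] by (rule polyfun_prod) (use nonzero in blast)
    show "Q i \<noteq> (\<lambda>_. 0)"
      unfolding Q_def[abs_def] by (rule polyfun_prod_nonzero) (use nonzero in auto)
  qed
  have "R ?k x = - (\<Sum>i\<in>{1..?k}. r i x *\<^sub>R R (?k - i) x)" for x
    using P Eval_monic_seq[of R ?k r x] by (simp add: Kern_Eval_def eq_neg_iff_add_eq_0)
  then have "minrel R ?k a \<longleftrightarrow>
      (\<forall>x. (\<Sum>i\<in>{1..?k}. (Q i x * (fst (a i) x - r i x * snd (a i) x)) *\<^sub>R R (?k - i) x) = 0)"
    unfolding Q_def by (rule minrel_iff_relation)
  also have "\<dots> \<longleftrightarrow> (\<forall>i\<in>{1..?k}. (\<lambda>x. Q i x * (fst (a i) x - r i x * snd (a i) x)) = (\<lambda>_. 0))"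
    by (rule kmin_polyfun_independent_iff[OF R]) (use Q pq r in \<open>auto intro!: polyfun.mult polyfun_minus\<close>)
  also have "\<dots> \<longleftrightarrow> (\<forall>i\<in>{1..?k}. fst (a i) = (\<lambda>x. r i x * snd (a i) x))"
  proof (intro ball_cong refl iffI)
    fix i assume i: "i \<in> {1..?k}"
    assume "(\<lambda>x. Q i x * (fst (a i) x - r i x * snd (a i) x)) = (\<lambda>_. 0)"
    then have "(\<lambda>x. fst (a i) x - r i x * snd (a i) x) = (\<lambda>_. 0)"
      using i pq r Q
      by (intro polyfun_eq_0_if_eq_0_where_nonzero[of "Q i"]) (auto simp: polyfun_minus polyfun.mult fun_eq_iff)
    then show "fst (a i) = (\<lambda>x. r i x * snd (a i) x)"
      by (simp add: fun_eq_iff)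
  qed (simp add: fun_eq_iff)
  finally show ?thesis .
qed

theorem mainTheorem8:
  fixes R :: "nat \<Rightarrow> 'a::euclidean_space \<Rightarrow> 'b::euclidean_space"
  assumes "\<forall>i. polyfun_vec (R i)"
    and "is_ideal (Kern_Eval R)"
  shows "\<exists>r. (\<forall>i\<in>{1..kmin R}. polyfun (r i))
    \<and> (\<forall>a. (\<forall>i\<in>{1..kmin R}. ratfun (a i)) \<longrightarrow>
          (minrel R (kmin R) a \<longleftrightarrow> (\<forall>i\<in>{1..kmin R}. fst (a i) = (\<lambda>x. r i x * snd (a i) x))))
    \<and> Kern_Eval R = {pmul d (monic_seq (kmin R) r) | d. d \<in> polyseq}"
proof -
  have R: "\<And>n. polyfun_vec (R n)"
    using assms(1) by blast
  obtain r where r: "\<And>i. polyfun (r i)" "monic_seq (kmin R) r \<in> Kern_Eval R"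
    using kmin_monic_relation[of R, OF R assms(2)] by blast
  have "\<forall>a. (\<forall>i\<in>{1..kmin R}. ratfun (a i)) \<longrightarrow>
      (minrel R (kmin R) a \<longleftrightarrow> (\<forall>i\<in>{1..kmin R}. fst (a i) = (\<lambda>x. r i x * snd (a i) x)))"
    using minrel_iff[of R r, OF R r] by blast
  moreover have "Kern_Eval R = {pmul d (monic_seq (kmin R) r) | d. d \<in> polyseq}"
    by (rule Kern_Eval_eq_multiples[of R, OF R assms(2) r(2)])
  ultimately show ?thesis
    using r(1) by blast
qed

end
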